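(* Let $E\subset\mathbb R^n$ and $F\subset\mathbb R^m$ be closed sets, and let $P:\mathbb R^n\to\mathbb R^m$ and $Q:\mathbb R^m\to\mathbb R^n$ be polynomial maps such that $P(E)=F$ and $Q\circ P$ is the identity on $E$. For $f\in\mathcal S(F)$ let $P^\flat f=f\circ P|_E$. Then $P^\flat$ maps $\mathcal S(F)$ into $\mathcal S(E)$ continuously.
   Context: For a closed set $E\subset\mathbb R^k$, $\mathcal S(E)$ denotes the space of restrictions to $E$ of Schwartz functions on $\mathbb R^k$, endowed with the quotient topology of $\mathcal S(\mathbb R^k)/\{f:f|_E=0\}$. *)

theory Defs
  imports "HOL-Analysis.Analysis"
begin

inductive polyfun :: "(real^'n \<Rightarrow> real) \<Rightarrow> bool" where
  pf_const: "polyfun (\<lambda>x. c)"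
| pf_coord: "polyfun (\<lambda>x. x $ i)"
| pf_add: "polyfun f \<Longrightarrow> polyfun g \<Longrightarrow> polyfun (\<lambda>x. f x + g x)"
| pf_mult: "polyfun f \<Longrightarrow> polyfun g \<Longrightarrow> polyfun (\<lambda>x. f x * g x)"

definition poly_map :: "(real^'n \<Rightarrow> real^'m) \<Rightarrow> bool" where
  "poly_map P \<longleftrightarrow> (\<forall>j. polyfun (\<lambda>x. P x $ j))"

definition pdiff :: "'n \<Rightarrow> (real^'n \<Rightarrow> real) \<Rightarrow> real^'n \<Rightarrow> real" where
  "pdiff i f x = deriv (\<lambda>t. f (x + t *\<^sub>R axis i 1)) 0"

fun Dpart :: "'n list \<Rightarrow> (real^'n \<Rightarrow> real) \<Rightarrow> real^'n \<Rightarrow> real" where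
  "Dpart [] f = f"
| "Dpart (i # is) f = pdiff i (Dpart is f)"

definition smooth_fun :: "(real^'n \<Rightarrow> real) \<Rightarrow> bool" where
  "smooth_fun f \<longleftrightarrow>
     (\<forall>is. continuous_on UNIV (Dpart is f) \<and>
        (\<forall>i x. ((\<lambda>t. Dpart is f (x + t *\<^sub>R axis i 1)) has_real_derivative pdiff i (Dpart is f) x) (at 0)))"

definition monom :: "('n::finite \<Rightarrow> nat) \<Rightarrow> real^'n \<Rightarrow> real" where
  "monom \<alpha> x = (\<Prod>i\<in>UNIV. (x $ i) ^ \<alpha> i)"

definition schwartz :: "(real^'n::finite \<Rightarrow> real) set" where
  "schwartz = {f. smooth_fun f \<and>
      (\<forall>\<alpha> is. bounded (range (\<lambda>x. monom \<alpha> x * Dpart is f x)))}"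

definition sw_seminorm :: "('n::finite \<Rightarrow> nat) \<Rightarrow> 'n list \<Rightarrow> (real^'n \<Rightarrow> real) \<Rightarrow> real" where
  "sw_seminorm \<alpha> is f = (SUP x. \<bar>monom \<alpha> x * Dpart is f x\<bar>)"

definition schwartz_top :: "(real^'n::finite \<Rightarrow> real) topology" where
  "schwartz_top = topology (\<lambda>V. V \<subseteq> schwartz \<and>
     (\<forall>f\<in>V. \<exists>N::nat. \<exists>\<epsilon>>0. {g\<in>schwartz. \<forall>\<alpha> is. sum \<alpha> UNIV \<le> N \<longrightarrow> length is \<le> N \<longrightarrow>
          sw_seminorm \<alpha> is (\<lambda>x. g x - f x) < \<epsilon>} \<subseteq> V))"

text \<open>A function on E is represented by its extension by 0 outside E.\<close>
definition restr :: "(real^'n) set \<Rightarrow> (real^'n \<Rightarrow> real) \<Rightarrow> real^'n \<Rightarrow> real" where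
  "restr E f = (\<lambda>x. if x \<in> E then f x else 0)"

definition schwartz_on :: "(real^'n::finite) set \<Rightarrow> (real^'n \<Rightarrow> real) set" where
  "schwartz_on E = restr E ` schwartz"

text \<open>Quotient topology of S(R^n)/{f : f|E = 0}, transported to S(E) via restriction.\<close>
definition schwartz_on_top :: "(real^'n::finite) set \<Rightarrow> (real^'n \<Rightarrow> real) topology" where
  "schwartz_on_top E = topology (\<lambda>U. U \<subseteq> schwartz_on E \<and>
      openin schwartz_top {f \<in> schwartz. restr E f \<in> U})"

definition pullback :: "(real^'n) set \<Rightarrow> (real^'n \<Rightarrow> real^'m) \<Rightarrow> (real^'m \<Rightarrow> real) \<Rightarrow> real^'n \<Rightarrow> real" where
  "pullback E P f = restr E (f \<circ> P)"

end

theory Submission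
  imports Defs "HOL-Library.Multiset"
begin

text \<open>On \<open>E\<close> the Gaussian weight \<open>exp (- norm (x - Q (P x))\<^sup>2)\<close> equals \<open>1\<close>, so
  \<open>P\<^sup>\<flat> (h|\<^sub>F) = (T h)|\<^sub>E\<close> for the operator \<open>T h = (h \<circ> P) \<cdot> exp (- norm (x - Q (P x))\<^sup>2)\<close>
  defined on all of \<open>\<real>\<^sup>n\<close>. By the chain and Leibniz rules every derivative of \<open>T h\<close> is a finite sum of
  terms \<open>c x \<cdot> (\<partial>\<^sup>\<beta> h) (P x) \<cdot> exp (- norm (x - Q (P x))\<^sup>2)\<close> with polynomial \<open>c\<close>. Since
  \<open>1 + norm x \<le> (1 + norm (x - Q (P x))) \<cdot> C (1 + norm (P x))\<^sup>d\<close>, the polynomial growth of \<open>c\<close> is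
  absorbed partly by the Gaussian and partly by the decay of \<open>\<partial>\<^sup>\<beta> h\<close> at \<open>P x\<close>. Hence every Schwartz
  seminorm of \<open>T h\<close> is bounded by finitely many seminorms of \<open>h\<close>, so the linear map \<open>T\<close> is
  continuous, and continuity passes to the quotient topologies.\<close>

lemma polyfun_diff: "polyfun f \<Longrightarrow> polyfun g \<Longrightarrow> polyfun (\<lambda>x. f x - g x)"
proof -
  assume "polyfun f" "polyfun g"
  then have "polyfun (\<lambda>x. f x + (-1) * g x)" by (intro polyfun.intros)
  then show ?thesis by simp
qed

lemma polyfun_neg: "polyfun f \<Longrightarrow> polyfun (\<lambda>x. - f x)"
  using polyfun_diff[OF polyfun.pf_const[of 0]] by simp

lemma polyfun_power: "polyfun f \<Longrightarrow> polyfun (\<lambda>x. f x ^ n)"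
  by (induction n) (auto intro: polyfun.intros)

lemma polyfun_sum: "finite S \<Longrightarrow> (\<And>i. i \<in> S \<Longrightarrow> polyfun (f i)) \<Longrightarrow> polyfun (\<lambda>x. \<Sum>i\<in>S. f i x)"
  by (induction rule: finite_induct) (auto intro: polyfun.intros)

lemma polyfun_prod: "finite S \<Longrightarrow> (\<And>i. i \<in> S \<Longrightarrow> polyfun (f i)) \<Longrightarrow> polyfun (\<lambda>x. \<Prod>i\<in>S. f i x)"
  by (induction rule: finite_induct) (auto intro: polyfun.intros)

lemma polyfun_monom: "polyfun (monom \<alpha>)"
  unfolding monom_def[abs_def] by (intro polyfun_prod polyfun_power polyfun.pf_coord) auto

lemma polyfun_compose_poly_map: "polyfun f \<Longrightarrow> poly_map P \<Longrightarrow> polyfun (\<lambda>x. f (P x))"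
  by (induction rule: polyfun.induct) (auto intro: polyfun.intros simp: poly_map_def)

lemma continuous_on_polyfun: "polyfun p \<Longrightarrow> continuous_on UNIV p"
  by (induction rule: polyfun.induct) (auto intro!: continuous_intros)

lemma continuous_on_poly_map: "poly_map P \<Longrightarrow> continuous_on UNIV P"
proof -
  assume "poly_map P"
  then have "continuous_on UNIV (\<lambda>x. \<chi> j. P x $ j)"
    by (intro continuous_on_vec_lambda) (auto simp: poly_map_def intro: continuous_on_polyfun)
  then show ?thesis by simp
qed

lemma polyfun_polynomial_growth:
  assumes "polyfun p"
  shows "\<exists>C K. C \<ge> 0 \<and> (\<forall>x. \<bar>p x\<bar> \<le> C * (1 + norm x) ^ K)"
  using assms
proof (induction rule: polyfun.induct)
  case (pf_const c)
  show ?case by (intro exI[of _ "\<bar>c\<bar>"] exI[of _ 0]) auto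
next
  case (pf_coord i)
  show ?case
    by (intro exI[of _ 1] exI[of _ 1]) (simp add: component_le_norm_cart add_increasing)
next
  case (pf_add f g)
  then obtain C1 K1 C2 K2 where C: "C1 \<ge> 0" "C2 \<ge> 0"
    and f: "\<And>x. \<bar>f x\<bar> \<le> C1 * (1 + norm x) ^ K1" and g: "\<And>x. \<bar>g x\<bar> \<le> C2 * (1 + norm x) ^ K2"
    by blast
  have "\<bar>f x + g x\<bar> \<le> (C1 + C2) * (1 + norm x) ^ (K1 + K2)" for x
  proof -
    have "C1 * (1 + norm x) ^ K1 \<le> C1 * (1 + norm x) ^ (K1 + K2)"
      "C2 * (1 + norm x) ^ K2 \<le> C2 * (1 + norm x) ^ (K1 + K2)"
      using C by (auto intro!: mult_left_mono power_increasing)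
    then show ?thesis using f[of x] g[of x] by (simp add: algebra_simps)
  qed
  then show ?case using C by (intro exI[of _ "C1 + C2"] exI[of _ "K1 + K2"]) auto
next
  case (pf_mult f g)
  then obtain C1 K1 C2 K2 where C: "C1 \<ge> 0" "C2 \<ge> 0"
    and f: "\<And>x. \<bar>f x\<bar> \<le> C1 * (1 + norm x) ^ K1" and g: "\<And>x. \<bar>g x\<bar> \<le> C2 * (1 + norm x) ^ K2"
    by blast
  have "\<bar>f x * g x\<bar> \<le> (C1 * C2) * (1 + norm x) ^ (K1 + K2)" for x
  proof -
    have "\<bar>f x * g x\<bar> \<le> (C1 * (1 + norm x) ^ K1) * (C2 * (1 + norm x) ^ K2)"
      unfolding abs_mult using C by (intro mult_mono f g) auto
    then show ?thesis by (simp add: power_add algebra_simps)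
  qed
  then show ?case using C by (intro exI[of _ "C1 * C2"] exI[of _ "K1 + K2"]) auto
qed

lemma poly_map_polynomial_growth:
  assumes "poly_map Q"
  shows "\<exists>C K. C \<ge> 0 \<and> (\<forall>y. norm (Q y) \<le> C * (1 + norm y) ^ K)"
proof -
  have "\<forall>j. \<exists>C K. C \<ge> 0 \<and> (\<forall>y. \<bar>Q y $ j\<bar> \<le> C * (1 + norm y) ^ K)"
    using assms polyfun_polynomial_growth unfolding poly_map_def by blast
  then obtain C K where C: "\<And>j. C j \<ge> 0" and bound: "\<And>j y. \<bar>Q y $ j\<bar> \<le> C j * (1 + norm y) ^ K j"
    by metis
  define K' where "K' = (\<Sum>j\<in>UNIV. K j)"
  have "norm (Q y) \<le> (\<Sum>j\<in>UNIV. C j) * (1 + norm y) ^ K'" for y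
  proof -
    have "norm (Q y) \<le> (\<Sum>j\<in>UNIV. \<bar>Q y $ j\<bar>)" by (rule norm_le_l1_cart)
    also have "\<dots> \<le> (\<Sum>j\<in>UNIV. C j * (1 + norm y) ^ K')"
    proof (rule sum_mono)
      fix j
      have "K j \<le> K'" unfolding K'_def by (rule member_le_sum) auto
      then have "C j * (1 + norm y) ^ K j \<le> C j * (1 + norm y) ^ K'"
        using C[of j] by (auto intro!: mult_left_mono power_increasing)
      then show "\<bar>Q y $ j\<bar> \<le> C j * (1 + norm y) ^ K'" using bound[of y j] by linarith
    qed
    finally show ?thesis by (simp add: sum_distrib_right)
  qed
  then show ?thesis using C by (intro exI[of _ "\<Sum>j\<in>UNIV. C j"] exI[of _ K']) (auto intro: sum_nonneg)
qed

section \<open>Partial derivatives and the chain rule\<close>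

abbreviation has_partial_derivative :: "'n \<Rightarrow> (real^'n \<Rightarrow> real) \<Rightarrow> real \<Rightarrow> real^'n \<Rightarrow> bool" where
  "has_partial_derivative i f D x \<equiv> ((\<lambda>t. f (x + t *\<^sub>R axis i 1)) has_real_derivative D) (at 0)"

lemma pdiff_eqI: "has_partial_derivative i f D x \<Longrightarrow> pdiff i f x = D"
  by (simp add: pdiff_def DERIV_imp_deriv)

lemma polyfun_has_partial_derivative:
  assumes "polyfun p"
  shows "\<exists>p'. polyfun p' \<and> (\<forall>x. has_partial_derivative i p (p' x) x)"
  using assms
proof (induction rule: polyfun.induct)
  case (pf_const c)
  show ?case by (intro exI[of _ "\<lambda>x. 0"]) (auto intro: polyfun.pf_const)
next
  case (pf_coord k)
  show ?case
    by (intro exI[of _ "\<lambda>x. if k = i then 1 else 0"])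
       (auto intro: polyfun.pf_const intro!: derivative_eq_intros simp: axis_def)
next
  case (pf_add f g)
  then obtain f' g' where "polyfun f'" "polyfun g'"
    and "\<And>x. has_partial_derivative i f (f' x) x" "\<And>x. has_partial_derivative i g (g' x) x"
    by blast
  then show ?case
    by (intro exI[of _ "\<lambda>x. f' x + g' x"]) (auto intro: polyfun.pf_add intro!: DERIV_add)
next
  case (pf_mult f g)
  then obtain f' g' where "polyfun f'" "polyfun g'"
    and f': "\<And>x. has_partial_derivative i f (f' x) x" and g': "\<And>x. has_partial_derivative i g (g' x) x"
    by blast
  have "has_partial_derivative i (\<lambda>x. f x * g x) (f' x * g x + f x * g' x) x" for x
    using DERIV_mult[OF f'[of x] g'[of x]] by (simp add: mult.commute)
  moreover have "polyfun (\<lambda>x. f' x * g x + f x * g' x)"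
    by (intro polyfun.pf_add polyfun.pf_mult \<open>polyfun f'\<close> \<open>polyfun g'\<close> pf_mult.hyps)
  ultimately show ?case by blast
qed

lemma
  assumes "polyfun p"
  shows polyfun_pdiff: "polyfun (pdiff i p)"
    and polyfun_has_pdiff: "has_partial_derivative i p (pdiff i p x) x"
proof -
  obtain p' where "polyfun p'" and p': "\<And>x. has_partial_derivative i p (p' x) x"
    using polyfun_has_partial_derivative[OF assms] by blast
  moreover have "pdiff i p = p'" using p' by (auto intro: pdiff_eqI)
  ultimately show "polyfun (pdiff i p)" "has_partial_derivative i p (pdiff i p x) x" by simp_all
qed

lemma line_has_real_derivative:
  assumes "\<And>y. has_partial_derivative j g (pdiff j g y) y"
  shows "((\<lambda>s. g (z + s *\<^sub>R axis j 1)) has_real_derivative pdiff j g (z + t *\<^sub>R axis j 1)) (at t)"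
proof -
  have "has_partial_derivative j g (pdiff j g (z + t *\<^sub>R axis j 1)) (z + t *\<^sub>R axis j 1)"
    by (rule assms)
  then have "((\<lambda>s. g (z + (s + t) *\<^sub>R axis j 1)) has_real_derivative pdiff j g (z + t *\<^sub>R axis j 1)) (at 0)"
    by (simp add: scaleR_add_left algebra_simps)
  then show ?thesis
    using DERIV_shift[of "\<lambda>s. g (z + s *\<^sub>R axis j 1)" _ 0 t] by simp
qed

lemma line_increment_estimate:
  assumes "\<And>y. has_partial_derivative j g (pdiff j g y) y"
    and close: "\<And>s. s \<in> closed_segment 0 h \<Longrightarrow> \<bar>pdiff j g (z + s *\<^sub>R axis j 1) - c\<bar> \<le> e"
  shows "\<bar>g (z + h *\<^sub>R axis j 1) - g z - h * c\<bar> \<le> 3 * e * \<bar>h\<bar>"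
proof -
  define f where "f s = g (z + s *\<^sub>R axis j 1)" for s
  define f' where "f' s = pdiff j g (z + s *\<^sub>R axis j 1)" for s
  have 0: "0 \<in> closed_segment 0 h" by simp
  have "norm (f h - f 0 - (h - 0) *\<^sub>R f' 0) \<le> norm (h - 0) * (2 * e)"
  proof (rule vector_differentiable_bound_linearization[of "closed_segment 0 h" f f' 0 h])
    show "(f has_vector_derivative f' x) (at x within closed_segment 0 h)" for x
      unfolding f_def f'_def has_real_derivative_iff_has_vector_derivative[symmetric]
      by (rule DERIV_subset[OF line_has_real_derivative[OF assms(1)]]) auto
    show "norm (f' x - f' 0) \<le> 2 * e" if "x \<in> closed_segment 0 h" for x
      using close[OF that] close[OF 0] unfolding f'_def by (simp add: abs_real_def split: if_splits)
  qed (auto simp: 0)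
  then have "\<bar>g (z + h *\<^sub>R axis j 1) - g z - h * pdiff j g z\<bar> \<le> \<bar>h\<bar> * (2 * e)"
    by (simp add: f_def f'_def)
  moreover have "\<bar>h * pdiff j g z - h * c\<bar> \<le> \<bar>h\<bar> * e"
    using close[OF 0] by (simp add: right_diff_distrib[symmetric] abs_mult mult_left_mono)
  ultimately show ?thesis by (simp add: algebra_simps)
qed

definition coord_proj :: "'m set \<Rightarrow> real^'m \<Rightarrow> real^'m" where
  "coord_proj S v = (\<chi> j. if j \<in> S then v $ j else 0)"

lemma coord_proj_empty: "coord_proj {} v = 0"
  by (simp add: coord_proj_def vec_eq_iff)

lemma coord_proj_UNIV: "coord_proj UNIV v = v"
  by (simp add: coord_proj_def vec_eq_iff)

lemma coord_proj_insert: "k \<notin> S \<Longrightarrow> coord_proj (insert k S) v = coord_proj S v + (v $ k) *\<^sub>R axis k 1"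
  by (auto simp: coord_proj_def vec_eq_iff axis_def)

text \<open>The increment is telescoped along the coordinate directions, with one mean value estimate each.\<close>
lemma increment_estimate:
  fixes g :: "real^'m \<Rightarrow> real"
  assumes dg: "\<And>j y. has_partial_derivative j g (pdiff j g y) y"
    and close: "\<And>z j. norm (z - y) \<le> norm v \<Longrightarrow> \<bar>pdiff j g z - pdiff j g y\<bar> \<le> e"
  shows "\<bar>g (y + coord_proj S v) - g y - (\<Sum>j\<in>S. v $ j * pdiff j g y)\<bar> \<le> 3 * e * (\<Sum>j\<in>S. \<bar>v $ j\<bar>)"
proof -
  have "finite S" by simp
  then show ?thesis
  proof (induction S rule: finite_induct)
    case empty
    then show ?case by (simp add: coord_proj_empty)
  next
    case (insert k S)
    let ?z = "y + coord_proj S v"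
    have "\<bar>g (?z + v $ k *\<^sub>R axis k 1) - g ?z - v $ k * pdiff k g y\<bar> \<le> 3 * e * \<bar>v $ k\<bar>"
    proof (rule line_increment_estimate[OF dg])
      fix s assume "s \<in> closed_segment 0 (v $ k)"
      then have "\<bar>s\<bar> \<le> \<bar>v $ k\<bar>"
        by (auto simp: closed_segment_eq_real_ivl split: if_splits)
      then have "norm (?z + s *\<^sub>R axis k 1 - y) \<le> norm v"
        using insert(2) by (intro norm_le_componentwise_cart) (auto simp: coord_proj_def axis_def)
      then show "\<bar>pdiff k g (?z + s *\<^sub>R axis k 1) - pdiff k g y\<bar> \<le> e" by (rule close)
    qed
    moreover have "y + coord_proj (insert k S) v = ?z + v $ k *\<^sub>R axis k 1"
      using insert(2) by (simp add: coord_proj_insert add.assoc)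
    ultimately show ?case
      using insert(2,3) by (simp add: algebra_simps)
  qed
qed

lemma has_derivative_continuous_partials:
  fixes g :: "real^'m \<Rightarrow> real"
  assumes dg: "\<And>j y. has_partial_derivative j g (pdiff j g y) y"
    and cont: "\<And>j. continuous_on UNIV (pdiff j g)"
  shows "(g has_derivative (\<lambda>v. \<Sum>j\<in>UNIV. v $ j * pdiff j g y)) (at y)"
  unfolding has_derivative_at_alt
proof (intro conjI allI impI)
  show "bounded_linear (\<lambda>v. \<Sum>j\<in>UNIV. v $ j * pdiff j g y)"
    by (intro bounded_linear_sum bounded_linear_intros) (simp add: bounded_linear_vec_nth)
next
  fix e :: real assume "e > 0"
  define e' where "e' = e / (3 * real CARD('m))"
  have e': "e' > 0" using \<open>e > 0\<close> by (simp add: e'_def)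
  have "\<forall>\<^sub>F z in at y. \<forall>j. dist (pdiff j g z) (pdiff j g y) < e'"
  proof (rule eventually_all_finite)
    fix j
    have "isCont (pdiff j g) y"
      using cont[of j] by (simp add: continuous_on_eq_continuous_at)
    then show "\<forall>\<^sub>F z in at y. dist (pdiff j g z) (pdiff j g y) < e'"
      unfolding isCont_def using e' by (rule tendstoD)
  qed
  then obtain d where "d > 0"
    and d: "\<And>z j. z \<noteq> y \<Longrightarrow> dist z y < d \<Longrightarrow> dist (pdiff j g z) (pdiff j g y) < e'"
    unfolding eventually_at by auto
  have "norm (g y' - g y - (\<Sum>j\<in>UNIV. (y' - y) $ j * pdiff j g y)) \<le> e * norm (y' - y)"
    if "norm (y' - y) < d" for y'
  proof -
    define v where "v = y' - y"
    have close: "\<bar>pdiff j g z - pdiff j g y\<bar> \<le> e'" if "norm (z - y) \<le> norm v" for z j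
      using d[of z j] e' that \<open>norm (y' - y) < d\<close>
      by (cases "z = y") (auto simp: dist_norm v_def)
    have "\<bar>g (y + coord_proj UNIV v) - g y - (\<Sum>j\<in>UNIV. v $ j * pdiff j g y)\<bar>
        \<le> 3 * e' * (\<Sum>j\<in>UNIV. \<bar>v $ j\<bar>)"
      by (rule increment_estimate[OF dg close])
    also have "\<dots> \<le> 3 * e' * (\<Sum>j\<in>(UNIV::'m set). norm v)"
      using e' by (intro mult_left_mono sum_mono) (auto simp: component_le_norm_cart)
    also have "\<dots> = e * norm v" by (simp add: e'_def)
    finally show ?thesis by (simp add: coord_proj_UNIV v_def)
  qed
  then show "\<exists>d>0. \<forall>y'. norm (y' - y) < d \<longrightarrow>
      norm (g y' - g y - (\<Sum>j\<in>UNIV. (y' - y) $ j * pdiff j g y)) \<le> e * norm (y' - y)"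
    using \<open>d > 0\<close> by blast
qed

lemma poly_map_line_has_derivative:
  fixes P :: "real^'n \<Rightarrow> real^'m"
  assumes "poly_map P"
  shows "((\<lambda>t. P (x + t *\<^sub>R axis i 1)) has_derivative (\<lambda>h. h *\<^sub>R (\<chi> j. pdiff i (\<lambda>x. P x $ j) x))) (at 0)"
proof (rule has_derivative_componentwise_within[THEN iffD2], rule ballI)
  fix b :: "real^'m" assume "b \<in> Basis"
  then obtain j where b: "b = axis j 1" unfolding Basis_vec_def by auto
  have "has_partial_derivative i (\<lambda>x. P x $ j) (pdiff i (\<lambda>x. P x $ j) x) x"
    using assms by (intro polyfun_has_pdiff) (simp add: poly_map_def)
  then have "((\<lambda>t. P (x + t *\<^sub>R axis i 1) $ j) has_derivative (\<lambda>h. h * pdiff i (\<lambda>x. P x $ j) x)) (at 0)"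
    by (simp add: has_field_derivative_def mult_commute_abs)
  then show "((\<lambda>t. P (x + t *\<^sub>R axis i 1) \<bullet> b) has_derivative
      (\<lambda>h. h *\<^sub>R (\<chi> j. pdiff i (\<lambda>x. P x $ j) x) \<bullet> b)) (at 0)"
    by (simp add: b inner_axis)
qed

lemma has_partial_derivative_compose_poly_map:
  fixes P :: "real^'n \<Rightarrow> real^'m" and g :: "real^'m \<Rightarrow> real"
  assumes P: "poly_map P"
    and dg: "\<And>j y. has_partial_derivative j g (pdiff j g y) y"
    and cont: "\<And>j. continuous_on UNIV (pdiff j g)"
  shows "has_partial_derivative i (\<lambda>x. g (P x))
           (\<Sum>j\<in>UNIV. pdiff i (\<lambda>x. P x $ j) x * pdiff j g (P x)) x"
proof -
  have "(g has_derivative (\<lambda>v. \<Sum>j\<in>UNIV. v $ j * pdiff j g (P x))) (at (P (x + 0 *\<^sub>R axis i 1)))"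
    using has_derivative_continuous_partials[OF dg cont] by simp
  from has_derivative_compose[OF poly_map_line_has_derivative[OF P] this]
  have "((\<lambda>t. g (P (x + t *\<^sub>R axis i 1))) has_derivative
     (\<lambda>h. \<Sum>j\<in>UNIV. h * (pdiff i (\<lambda>x. P x $ j) x * pdiff j g (P x)))) (at 0)"
    by (simp add: mult.assoc)
  moreover have "(\<lambda>h. \<Sum>j\<in>UNIV. h * (pdiff i (\<lambda>x. P x $ j) x * pdiff j g (P x)))
      = (*) (\<Sum>j\<in>UNIV. pdiff i (\<lambda>x. P x $ j) x * pdiff j g (P x))"
    by (auto simp: fun_eq_iff sum_distrib_left mult.commute)
  ultimately show ?thesis by (simp add: has_field_derivative_def)
qed

lemma smooth_fun_continuous_Dpart: "smooth_fun h \<Longrightarrow> continuous_on UNIV (Dpart is h)"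
  by (simp add: smooth_fun_def)

lemma smooth_fun_has_partial_derivative:
  "smooth_fun h \<Longrightarrow> has_partial_derivative i (Dpart is h) (Dpart (i # is) h x) x"
  by (simp add: smooth_fun_def)

lemma smooth_fun_Dpart_compose_poly_map:
  assumes "smooth_fun h" "poly_map P"
  shows "has_partial_derivative i (\<lambda>x. Dpart \<beta> h (P x))
           (\<Sum>j\<in>UNIV. pdiff i (\<lambda>x. P x $ j) x * Dpart (j # \<beta>) h (P x)) x"
proof -
  have "has_partial_derivative i (\<lambda>x. Dpart \<beta> h (P x))
           (\<Sum>j\<in>UNIV. pdiff i (\<lambda>x. P x $ j) x * pdiff j (Dpart \<beta> h) (P x)) x"
  proof (rule has_partial_derivative_compose_poly_map[OF assms(2)])
    show "has_partial_derivative j (Dpart \<beta> h) (pdiff j (Dpart \<beta> h) y) y" for j y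
      using smooth_fun_has_partial_derivative[OF assms(1), of \<beta> y j] by simp
    show "continuous_on UNIV (pdiff j (Dpart \<beta> h))" for j
      using smooth_fun_continuous_Dpart[OF assms(1), of "j # \<beta>"] by simp
  qed
  then show ?thesis by simp
qed

lemma Dpart_diff:
  assumes f: "smooth_fun f" and g: "smooth_fun g"
  shows "Dpart is (\<lambda>x. f x - g x) = (\<lambda>x. Dpart is f x - Dpart is g x)"
proof (induction "is")
  case (Cons i "is")
  show ?case
  proof
    fix x
    have "has_partial_derivative i (\<lambda>x. Dpart is f x - Dpart is g x)
        (Dpart (i # is) f x - Dpart (i # is) g x) x"
      by (intro DERIV_diff smooth_fun_has_partial_derivative f g)
    then show "Dpart (i # is) (\<lambda>x. f x - g x) x = Dpart (i # is) f x - Dpart (i # is) g x"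
      by (simp only: Dpart.simps(2) Cons pdiff_eqI)
  qed
qed simp

lemma smooth_fun_diff:
  assumes f: "smooth_fun f" and g: "smooth_fun g"
  shows "smooth_fun (\<lambda>x. f x - g x)"
  unfolding smooth_fun_def Dpart_diff[OF f g]
proof (intro allI conjI)
  fix "is" i x
  show "continuous_on UNIV (\<lambda>x. Dpart is f x - Dpart is g x)"
    using smooth_fun_continuous_Dpart[OF f] smooth_fun_continuous_Dpart[OF g]
    by (intro continuous_intros)
  have "has_partial_derivative i (\<lambda>x. Dpart is f x - Dpart is g x)
      (Dpart (i # is) f x - Dpart (i # is) g x) x"
    by (intro DERIV_diff smooth_fun_has_partial_derivative f g)
  then show "has_partial_derivative i (\<lambda>x. Dpart is f x - Dpart is g x)
      (pdiff i (\<lambda>x. Dpart is f x - Dpart is g x) x) x"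
    by (simp add: pdiff_eqI)
qed

lemma schwartz_diff:
  assumes f: "f \<in> schwartz" and g: "g \<in> schwartz"
  shows "(\<lambda>x. f x - g x) \<in> schwartz"
proof -
  have sf: "smooth_fun f" and sg: "smooth_fun g" using f g by (auto simp: schwartz_def)
  have "bounded (range (\<lambda>x. monom \<alpha> x * Dpart is (\<lambda>x. f x - g x) x))" for \<alpha> "is"
  proof -
    obtain B1 where B1: "\<And>x. \<bar>monom \<alpha> x * Dpart is f x\<bar> \<le> B1"
      using f unfolding schwartz_def bounded_iff by force
    obtain B2 where B2: "\<And>x. \<bar>monom \<alpha> x * Dpart is g x\<bar> \<le> B2"
      using g unfolding schwartz_def bounded_iff by force
    have "\<bar>monom \<alpha> x * Dpart is (\<lambda>x. f x - g x) x\<bar> \<le> B1 + B2" for x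
      using B1[of x] B2[of x] by (simp add: Dpart_diff[OF sf sg] right_diff_distrib abs_le_iff)
    then show ?thesis unfolding bounded_iff by auto
  qed
  then show ?thesis using smooth_fun_diff[OF sf sg] by (simp add: schwartz_def)
qed

section \<open>The extension operator and its derivatives\<close>

definition defect_sq :: "(real^'n \<Rightarrow> real^'m) \<Rightarrow> (real^'m \<Rightarrow> real^'n) \<Rightarrow> real^'n \<Rightarrow> real" where
  "defect_sq P Q x = (\<Sum>i\<in>UNIV. (x $ i - Q (P x) $ i)\<^sup>2)"

definition gauss_weight :: "(real^'n \<Rightarrow> real^'m) \<Rightarrow> (real^'m \<Rightarrow> real^'n) \<Rightarrow> real^'n \<Rightarrow> real" where
  "gauss_weight P Q x = exp (- defect_sq P Q x)"

definition pullback_ext ::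
    "(real^'n \<Rightarrow> real^'m) \<Rightarrow> (real^'m \<Rightarrow> real^'n) \<Rightarrow> (real^'m \<Rightarrow> real) \<Rightarrow> real^'n \<Rightarrow> real" where
  "pullback_ext P Q h x = h (P x) * gauss_weight P Q x"

lemma defect_sq_eq_norm: "defect_sq P Q x = (norm (x - Q (P x)))\<^sup>2"
  unfolding power2_norm_eq_inner by (simp add: defect_sq_def inner_vec_def power2_eq_square)

lemma polyfun_defect_sq:
  assumes "poly_map P" "poly_map Q"
  shows "polyfun (defect_sq P Q)"
proof -
  have "polyfun (\<lambda>x. Q (P x) $ i)" for i
    using polyfun_compose_poly_map[of "\<lambda>y. Q y $ i" P] assms by (simp add: poly_map_def)
  then show ?thesis unfolding defect_sq_def[abs_def]
    by (intro polyfun_sum polyfun_power polyfun_diff polyfun.pf_coord) auto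
qed

lemma gauss_weight_has_partial_derivative:
  assumes "poly_map P" "poly_map Q"
  shows "has_partial_derivative i (gauss_weight P Q) (gauss_weight P Q x * - pdiff i (defect_sq P Q) x) x"
  using DERIV_chain2[OF DERIV_exp DERIV_minus[OF polyfun_has_pdiff[OF polyfun_defect_sq[OF assms]]]]
  by (simp add: gauss_weight_def)

text \<open>A term \<open>(c, \<beta>)\<close> stands for \<open>x \<mapsto> c x * (\<partial>\<^sup>\<beta> h) (P x) * gauss_weight P Q x\<close> with polynomial \<open>c\<close>;
  multisets of terms represent their sums.\<close>
definition chain_term :: "(real^'n \<Rightarrow> real^'m) \<Rightarrow> (real^'m \<Rightarrow> real^'n) \<Rightarrow>
    (real^'n \<Rightarrow> real) \<times> 'm list \<Rightarrow> (real^'m \<Rightarrow> real) \<Rightarrow> real^'n \<Rightarrow> real" where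
  "chain_term P Q e h x = fst e x * Dpart (snd e) h (P x) * gauss_weight P Q x"

definition chain_sum :: "(real^'n \<Rightarrow> real^'m) \<Rightarrow> (real^'m \<Rightarrow> real^'n) \<Rightarrow>
    ((real^'n \<Rightarrow> real) \<times> 'm list) multiset \<Rightarrow> (real^'m \<Rightarrow> real) \<Rightarrow> real^'n \<Rightarrow> real" where
  "chain_sum P Q M h x = (\<Sum>e\<in>#M. chain_term P Q e h x)"

definition chain_term_pdiff :: "(real^'n \<Rightarrow> real^'m) \<Rightarrow> (real^'m \<Rightarrow> real^'n) \<Rightarrow> 'n \<Rightarrow>
    (real^'n \<Rightarrow> real) \<times> 'm list \<Rightarrow> ((real^'n \<Rightarrow> real) \<times> 'm list) multiset" where
  "chain_term_pdiff P Q i e =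
     {#(pdiff i (fst e), snd e), (\<lambda>x. - (fst e x * pdiff i (defect_sq P Q) x), snd e)#}
     + image_mset (\<lambda>j. (\<lambda>x. fst e x * pdiff i (\<lambda>x. P x $ j) x, j # snd e)) (mset_set UNIV)"

lemma chain_sum_empty [simp]: "chain_sum P Q {#} h x = 0"
  by (simp add: chain_sum_def)

lemma chain_sum_add_mset [simp]:
  "chain_sum P Q (add_mset e M) h x = chain_term P Q e h x + chain_sum P Q M h x"
  by (simp add: chain_sum_def)

lemma chain_sum_union [simp]: "chain_sum P Q (M + N) h x = chain_sum P Q M h x + chain_sum P Q N h x"
  by (simp add: chain_sum_def)

lemma chain_term_has_partial_derivative:
  assumes P: "poly_map P" and Q: "poly_map Q" and c: "polyfun c" and h: "smooth_fun h"
  shows "has_partial_derivative i (chain_term P Q (c, \<beta>) h)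
           (chain_sum P Q (chain_term_pdiff P Q i (c, \<beta>)) h x) x"
proof -
  let ?D = "\<lambda>\<gamma>. Dpart \<gamma> h (P x)" and ?w = "gauss_weight P Q x"
  have "has_partial_derivative i (\<lambda>x. c x * Dpart \<beta> h (P x) * gauss_weight P Q x)
     ((pdiff i c x * ?D \<beta> + (\<Sum>j\<in>UNIV. pdiff i (\<lambda>x. P x $ j) x * ?D (j # \<beta>)) * c x) * ?w
       + ?w * - pdiff i (defect_sq P Q) x * (c x * ?D \<beta>)) x"
    using DERIV_mult[OF DERIV_mult[OF polyfun_has_pdiff[OF c] smooth_fun_Dpart_compose_poly_map[OF h P]]
        gauss_weight_has_partial_derivative[OF P Q]]
    by simp
  moreover have "chain_sum P Q (chain_term_pdiff P Q i (c, \<beta>)) h x =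
     (pdiff i c x * ?D \<beta> + (\<Sum>j\<in>UNIV. pdiff i (\<lambda>x. P x $ j) x * ?D (j # \<beta>)) * c x) * ?w
       + ?w * - pdiff i (defect_sq P Q) x * (c x * ?D \<beta>)"
    by (simp add: chain_sum_def chain_term_pdiff_def chain_term_def multiset.map_comp o_def
        sum_unfold_sum_mset[symmetric] sum_distrib_left sum_distrib_right algebra_simps)
  ultimately show ?thesis by (simp add: chain_term_def)
qed

lemma chain_sum_has_partial_derivative:
  assumes P: "poly_map P" and Q: "poly_map Q" and h: "smooth_fun h"
    and M: "\<forall>e\<in>#M. polyfun (fst e)"
  shows "has_partial_derivative i (chain_sum P Q M h)
           (chain_sum P Q (\<Sum>e\<in>#M. chain_term_pdiff P Q i e) h x) x"
  using M
proof (induction M)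
  case (add e M)
  obtain c \<beta> where "e = (c, \<beta>)" by fastforce
  with add show ?case
    by (auto intro!: DERIV_add chain_term_has_partial_derivative[OF P Q _ h])
qed simp

lemma chain_term_pdiff_orders:
  assumes P: "poly_map P" and Q: "poly_map Q"
    and "polyfun (fst e)" and "e' \<in># chain_term_pdiff P Q i e"
  shows "polyfun (fst e') \<and> length (snd e') \<le> Suc (length (snd e))"
proof -
  have "polyfun (pdiff i (\<lambda>x. P x $ j))" for j
    using P by (intro polyfun_pdiff) (simp add: poly_map_def)
  then show ?thesis
    using assms polyfun_pdiff[OF polyfun_defect_sq[OF P Q], of i] polyfun_pdiff[of "fst e" i]
    by (auto simp: chain_term_pdiff_def intro!: polyfun.pf_mult polyfun_neg)
qed

lemma Dpart_pullback_ext_eq_chain_sum: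
  assumes P: "poly_map P" and Q: "poly_map Q"
  shows "\<exists>M. (\<forall>e\<in>#M. polyfun (fst e) \<and> length (snd e) \<le> length is) \<and>
     (\<forall>h. smooth_fun h \<longrightarrow> Dpart is (pullback_ext P Q h) = chain_sum P Q M h)"
proof (induction "is")
  case Nil
  show ?case
    by (intro exI[of _ "{#(\<lambda>x. 1, [])#}"])
      (auto simp: chain_term_def pullback_ext_def fun_eq_iff intro: polyfun.pf_const)
next
  case (Cons i "is")
  then obtain M where M: "\<forall>e\<in>#M. polyfun (fst e) \<and> length (snd e) \<le> length is"
    and eq: "\<And>h. smooth_fun h \<Longrightarrow> Dpart is (pullback_ext P Q h) = chain_sum P Q M h"
    by blast
  have "\<forall>e\<in>#(\<Sum>e\<in>#M. chain_term_pdiff P Q i e). polyfun (fst e) \<and> length (snd e) \<le> length (i # is)"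
    using M chain_term_pdiff_orders[OF P Q] by fastforce
  moreover have "Dpart (i # is) (pullback_ext P Q h) = chain_sum P Q (\<Sum>e\<in>#M. chain_term_pdiff P Q i e) h"
    if "smooth_fun h" for h
    using chain_sum_has_partial_derivative[OF P Q that] M
    by (auto simp: fun_eq_iff eq[OF that] intro!: pdiff_eqI)
  ultimately show ?case by blast
qed

lemma continuous_on_chain_sum:
  assumes P: "poly_map P" and Q: "poly_map Q" and h: "smooth_fun h"
    and M: "\<forall>e\<in>#M. polyfun (fst e)"
  shows "continuous_on UNIV (chain_sum P Q M h)"
  using M
proof (induction M)
  case empty
  then show ?case by (simp add: chain_sum_def)
next
  case (add e M)
  have "continuous_on UNIV (gauss_weight P Q)"
    unfolding gauss_weight_def[abs_def]
    by (intro continuous_intros continuous_on_polyfun polyfun_defect_sq P Q)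
  moreover have "continuous_on UNIV (\<lambda>x. Dpart (snd e) h (P x))"
    using continuous_on_compose[OF continuous_on_poly_map[OF P], of "Dpart (snd e) h"]
      continuous_on_subset[OF smooth_fun_continuous_Dpart[OF h], of "range P"]
    by (simp add: o_def)
  ultimately have "continuous_on UNIV (\<lambda>x. chain_term P Q e h x + chain_sum P Q M h x)"
    using add unfolding chain_term_def by (intro continuous_intros) (auto intro: continuous_on_polyfun)
  then show ?case by (simp add: chain_sum_def)
qed

lemma smooth_fun_pullback_ext:
  assumes P: "poly_map P" and Q: "poly_map Q" and h: "smooth_fun h"
  shows "smooth_fun (pullback_ext P Q h)"
  unfolding smooth_fun_def
proof (intro allI conjI)
  fix "is" i x
  obtain M where M: "\<forall>e\<in>#M. polyfun (fst e)"
    and eq: "Dpart is (pullback_ext P Q h) = chain_sum P Q M h"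
    using Dpart_pullback_ext_eq_chain_sum[OF P Q, of "is"] h by blast
  show "continuous_on UNIV (Dpart is (pullback_ext P Q h))"
    unfolding eq by (rule continuous_on_chain_sum[OF P Q h M])
  have "has_partial_derivative i (chain_sum P Q M h)
      (chain_sum P Q (\<Sum>e\<in>#M. chain_term_pdiff P Q i e) h x) x"
    by (rule chain_sum_has_partial_derivative[OF P Q h M])
  with pdiff_eqI[OF this]
  show "has_partial_derivative i (Dpart is (pullback_ext P Q h)) (pdiff i (Dpart is (pullback_ext P Q h)) x) x"
    unfolding eq by simp
qed

section \<open>Seminorm estimates\<close>

lemma abs_le_sw_seminorm:
  assumes "h \<in> schwartz"
  shows "\<bar>monom \<alpha> y * Dpart \<gamma> h y\<bar> \<le> sw_seminorm \<alpha> \<gamma> h"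
proof -
  have "bounded (range (\<lambda>x. monom \<alpha> x * Dpart \<gamma> h x))"
    using assms by (simp add: schwartz_def)
  then have "bdd_above (range (\<lambda>x. \<bar>monom \<alpha> x * Dpart \<gamma> h x\<bar>))"
    unfolding bounded_iff by (auto intro: bdd_aboveI2)
  then show ?thesis unfolding sw_seminorm_def by (rule cSUP_upper[OF UNIV_I])
qed

lemma sw_seminorm_le: "(\<And>x. \<bar>monom \<alpha> x * Dpart \<gamma> h x\<bar> \<le> B) \<Longrightarrow> sw_seminorm \<alpha> \<gamma> h \<le> B"
  unfolding sw_seminorm_def by (rule cSUP_least) auto

lemma sw_seminorm_nonneg: "h \<in> schwartz \<Longrightarrow> sw_seminorm \<alpha> \<gamma> h \<ge> 0"
  using abs_le_sw_seminorm[of h \<alpha> 0 \<gamma>] by linarith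

definition seminorms_le :: "nat \<Rightarrow> real \<Rightarrow> (real^'m \<Rightarrow> real) \<Rightarrow> bool" where
  "seminorms_le N \<delta> h \<longleftrightarrow>
     (\<forall>\<beta> \<gamma>. sum \<beta> UNIV \<le> N \<longrightarrow> length \<gamma> \<le> N \<longrightarrow> sw_seminorm \<beta> \<gamma> h \<le> \<delta>)"

lemma seminorms_leD: "seminorms_le N \<delta> h \<Longrightarrow> sum \<beta> UNIV \<le> N \<Longrightarrow> length \<gamma> \<le> N \<Longrightarrow> sw_seminorm \<beta> \<gamma> h \<le> \<delta>"
  by (simp add: seminorms_le_def)

lemma seminorms_le_mono: "seminorms_le N \<delta> h \<Longrightarrow> N' \<le> N \<Longrightarrow> seminorms_le N' \<delta> h"
  by (auto simp: seminorms_le_def)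

lemma seminorms_le_nonneg:
  assumes "h \<in> schwartz" and "seminorms_le N \<delta> h"
  shows "\<delta> \<ge> 0"
  using sw_seminorm_nonneg[OF assms(1), of "\<lambda>k. 0" "[]"] seminorms_leD[OF assms(2), of "\<lambda>k. 0" "[]"]
  by simp

lemma finite_orders_le: "finite {(\<beta>::'m::finite \<Rightarrow> nat, \<gamma>::'m list). sum \<beta> UNIV \<le> N \<and> length \<gamma> \<le> N}"
proof (rule finite_subset[OF _ finite_cartesian_product])
  show "{(\<beta>::'m \<Rightarrow> nat, \<gamma>::'m list). sum \<beta> UNIV \<le> N \<and> length \<gamma> \<le> N}
      \<subseteq> {\<beta>. \<forall>k. \<beta> k \<le> N} \<times> {\<gamma>. set \<gamma> \<subseteq> UNIV \<and> length \<gamma> \<le> N}"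
  proof clarsimp
    fix \<beta> :: "'m \<Rightarrow> nat" and k assume "sum \<beta> UNIV \<le> N"
    moreover have "\<beta> k \<le> sum \<beta> UNIV" by (rule member_le_sum) auto
    ultimately show "\<beta> k \<le> N" by simp
  qed
  have "{\<beta>::'m \<Rightarrow> nat. \<forall>k. \<beta> k \<le> N} = (\<Pi>\<^sub>E k\<in>UNIV. {..N})" by (auto simp: PiE_def Pi_def)
  then show "finite {\<beta>::'m \<Rightarrow> nat. \<forall>k. \<beta> k \<le> N}" by (simp add: finite_PiE)
  show "finite {\<gamma>::'m list. set \<gamma> \<subseteq> UNIV \<and> length \<gamma> \<le> N}"
    by (rule finite_lists_length_le) simp
qed

lemma seminorms_le_exists:
  assumes "h \<in> schwartz"
  shows "\<exists>\<delta>. seminorms_le N \<delta> h"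
proof -
  let ?S = "{(\<beta>::'m \<Rightarrow> nat, \<gamma>::'m list). sum \<beta> UNIV \<le> N \<and> length \<gamma> \<le> N}"
  have "seminorms_le N (\<Sum>p\<in>?S. sw_seminorm (fst p) (snd p) h) h"
    unfolding seminorms_le_def
    using member_le_sum[of _ ?S "\<lambda>p. sw_seminorm (fst p) (snd p) h"]
      finite_orders_le sw_seminorm_nonneg[OF assms]
    by fastforce
  then show ?thesis ..
qed

lemma power_add_le_two_power:
  fixes a b :: real
  assumes "a \<ge> 0" "b \<ge> 0"
  shows "(a + b) ^ L \<le> 2 ^ L * (a ^ L + b ^ L)"
proof -
  have "(a + b) ^ L \<le> (2 * max a b) ^ L"
    using assms by (intro power_mono) auto
  also have "\<dots> = 2 ^ L * max a b ^ L" by (simp add: power_mult_distrib)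
  also have "\<dots> \<le> 2 ^ L * (a ^ L + b ^ L)"
    using assms by (cases "a \<le> b") (auto simp: max_def)
  finally show ?thesis .
qed

lemma power_one_plus_sum_le:
  fixes u :: "'a \<Rightarrow> real"
  assumes "finite S" "\<And>i. i \<in> S \<Longrightarrow> u i \<ge> 0"
  shows "(1 + (\<Sum>i\<in>S. u i)) ^ L \<le> 2 ^ (L * card S) * (1 + (\<Sum>i\<in>S. u i ^ L))"
  using assms
proof (induction S rule: finite_induct)
  case (insert k S)
  have "(\<Sum>i\<in>S. u i) \<ge> 0" "(\<Sum>i\<in>S. u i ^ L) \<ge> 0" "u k \<ge> 0"
    using insert by (auto intro!: sum_nonneg)
  have "(1 + (\<Sum>i\<in>insert k S. u i)) ^ L = ((1 + (\<Sum>i\<in>S. u i)) + u k) ^ L"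
    using insert by (simp add: algebra_simps)
  also have "\<dots> \<le> 2 ^ L * ((1 + (\<Sum>i\<in>S. u i)) ^ L + u k ^ L)"
    using \<open>(\<Sum>i\<in>S. u i) \<ge> 0\<close> \<open>u k \<ge> 0\<close> by (intro power_add_le_two_power) auto
  also have "\<dots> \<le> 2 ^ L * (2 ^ (L * card S) * (1 + (\<Sum>i\<in>S. u i ^ L)) + 2 ^ (L * card S) * u k ^ L)"
  proof -
    have "u k ^ L \<le> 2 ^ (L * card S) * u k ^ L"
      using \<open>u k \<ge> 0\<close> by (simp add: mult_le_cancel_right1 one_le_power)
    then show ?thesis using insert by (intro mult_left_mono add_mono) auto
  qed
  also have "\<dots> = 2 ^ (L * card (insert k S)) * (1 + (\<Sum>i\<in>insert k S. u i ^ L))"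
    using insert by (simp add: algebra_simps power_add)
  finally show ?case .
qed simp

lemma monom_single: "monom (\<lambda>k. if k = i then L else 0) y = (y $ i) ^ L"
proof -
  have "monom (\<lambda>k. if k = i then L else 0) y = (\<Prod>k\<in>UNIV. if k = i then (y $ k) ^ L else 1)"
    unfolding monom_def by (intro prod.cong) auto
  then show ?thesis by simp
qed

text \<open>The weight \<open>(1 + norm y) ^ L\<close> is dominated by a combination of the monomials \<open>(y $ i) ^ L\<close>.\<close>
lemma power_one_plus_norm_Dpart_le:
  fixes h :: "real^'m \<Rightarrow> real"
  assumes h: "h \<in> schwartz" and H: "seminorms_le N \<delta> h" and "L \<le> N" and "length \<gamma> \<le> N"
  shows "(1 + norm y) ^ L * \<bar>Dpart \<gamma> h y\<bar> \<le> 2 ^ (L * CARD('m)) * (1 + real CARD('m)) * \<delta>"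
proof -
  let ?D = "\<bar>Dpart \<gamma> h y\<bar>"
  have "?D \<le> sw_seminorm (\<lambda>k. 0) \<gamma> h"
    using abs_le_sw_seminorm[OF h, of "\<lambda>k. 0" y \<gamma>] by (simp add: monom_def)
  then have D0: "?D \<le> \<delta>" using seminorms_leD[OF H, of "\<lambda>k. 0" \<gamma>] assms(4) by simp
  have Di: "\<bar>y $ i\<bar> ^ L * ?D \<le> \<delta>" for i
  proof -
    have "\<bar>y $ i\<bar> ^ L * ?D \<le> sw_seminorm (\<lambda>k. if k = i then L else 0) \<gamma> h"
      using abs_le_sw_seminorm[OF h, of "\<lambda>k. if k = i then L else 0" y \<gamma>]
      by (simp add: monom_single abs_mult power_abs)
    also have "\<dots> \<le> \<delta>" using seminorms_leD[OF H, of "\<lambda>k. if k = i then L else 0" \<gamma>] assms(3,4) by simp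
    finally show ?thesis .
  qed
  have "(1 + norm y) ^ L \<le> (1 + (\<Sum>i\<in>UNIV. \<bar>y $ i\<bar>)) ^ L"
    by (intro power_mono) (auto simp: norm_le_l1_cart)
  also have "\<dots> \<le> 2 ^ (L * CARD('m)) * (1 + (\<Sum>i\<in>UNIV. \<bar>y $ i\<bar> ^ L))"
    by (rule power_one_plus_sum_le) auto
  finally have "(1 + norm y) ^ L * ?D \<le> 2 ^ (L * CARD('m)) * (1 + (\<Sum>i\<in>UNIV. \<bar>y $ i\<bar> ^ L)) * ?D"
    by (simp add: mult_right_mono)
  also have "\<dots> = 2 ^ (L * CARD('m)) * (?D + (\<Sum>i\<in>UNIV. \<bar>y $ i\<bar> ^ L * ?D))"
    by (simp add: algebra_simps sum_distrib_left)
  also have "\<dots> \<le> 2 ^ (L * CARD('m)) * (\<delta> + (\<Sum>i\<in>(UNIV::'m set). \<delta>))"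
    using D0 Di by (intro mult_left_mono add_mono sum_mono) auto
  also have "\<dots> = 2 ^ (L * CARD('m)) * (1 + real CARD('m)) * \<delta>"
    by (simp add: algebra_simps)
  finally show ?thesis .
qed

lemma power_one_plus_mult_exp_neg_square_le:
  fixes a :: real
  assumes "a \<ge> 0"
  shows "(1 + a) ^ K * exp (- a\<^sup>2) \<le> exp (real K ^ 2 / 4)"
proof -
  have "(1 + a) ^ K \<le> exp a ^ K"
    using assms by (intro power_mono) (auto simp: exp_ge_add_one_self)
  then have "(1 + a) ^ K * exp (- a\<^sup>2) \<le> exp (real K * a - a\<^sup>2)"
    by (simp add: exp_of_nat_mult[symmetric] exp_diff exp_minus field_simps)
  also have "\<dots> \<le> exp (real K ^ 2 / 4)"
    using zero_le_power2[of "a - real K / 2"] by (simp add: power2_eq_square algebra_simps)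
  finally show ?thesis .
qed

lemma one_plus_norm_le_defect_mult:
  fixes P :: "real^'n \<Rightarrow> real^'m" and Q :: "real^'m \<Rightarrow> real^'n"
  assumes "CQ \<ge> 0" and Q: "\<And>y. norm (Q y) \<le> CQ * (1 + norm y) ^ d"
  shows "1 + norm x \<le> (1 + norm (x - Q (P x))) * ((1 + CQ) * (1 + norm (P x)) ^ d)"
proof -
  let ?a = "norm (x - Q (P x))" and ?B = "(1 + norm (P x)) ^ d"
  have "?B \<ge> 1" by (simp add: one_le_power)
  have "1 + norm x \<le> 1 + ?a + CQ * ?B"
    using norm_triangle_sub[of x "Q (P x)"] Q[of "P x"] by simp
  also have "\<dots> \<le> (1 + ?a) * ?B + (1 + ?a) * CQ * ?B"
  proof (rule add_mono)
    show "1 + ?a \<le> (1 + ?a) * ?B"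
      using mult_left_mono[OF \<open>?B \<ge> 1\<close>, of "1 + ?a"] by simp
    have "0 \<le> ?a * CQ * ?B" using \<open>?B \<ge> 1\<close> \<open>CQ \<ge> 0\<close> by simp
    then show "CQ * ?B \<le> (1 + ?a) * CQ * ?B" by (simp add: algebra_simps)
  qed
  finally show ?thesis by (simp add: algebra_simps)
qed

lemma chain_term_bound:
  fixes P :: "real^'n \<Rightarrow> real^'m" and Q :: "real^'m \<Rightarrow> real^'n"
  assumes P: "poly_map P" and Q: "poly_map Q" and c: "polyfun c"
  shows "\<exists>N C. C \<ge> 0 \<and> (\<forall>h \<delta> x. h \<in> schwartz \<longrightarrow> seminorms_le N \<delta> h \<longrightarrow>
            \<bar>monom \<alpha> x * chain_term P Q (c, \<beta>) h x\<bar> \<le> C * \<delta>)"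
proof -
  obtain Cp K where "Cp \<ge> 0" and growth_c: "\<And>x. \<bar>monom \<alpha> x * c x\<bar> \<le> Cp * (1 + norm x) ^ K"
    using polyfun_polynomial_growth[OF polyfun.pf_mult[OF polyfun_monom c]] by blast
  obtain CQ d where "CQ \<ge> 0" and growth_Q: "\<And>y. norm (Q y) \<le> CQ * (1 + norm y) ^ d"
    using poly_map_polynomial_growth[OF Q] by blast
  define W where "W = 2 ^ (d * K * CARD('m)) * (1 + real CARD('m))"
  define C where "C = Cp * (1 + CQ) ^ K * exp (real K ^ 2 / 4) * W"
  have "\<bar>monom \<alpha> x * chain_term P Q (c, \<beta>) h x\<bar> \<le> C * \<delta>"
    if h: "h \<in> schwartz" and H: "seminorms_le (d * K + length \<beta>) \<delta> h" for h \<delta> x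
  proof -
    let ?a = "norm (x - Q (P x))" and ?b = "1 + norm (P x)" and ?w = "gauss_weight P Q x"
      and ?D = "\<bar>Dpart \<beta> h (P x)\<bar>"
    have "\<bar>monom \<alpha> x * c x\<bar> \<le> Cp * (1 + norm x) ^ K" by (rule growth_c)
    also have "\<dots> \<le> Cp * ((1 + ?a) * ((1 + CQ) * ?b ^ d)) ^ K"
      using one_plus_norm_le_defect_mult[OF \<open>CQ \<ge> 0\<close> growth_Q] \<open>Cp \<ge> 0\<close>
      by (intro mult_left_mono power_mono) auto
    also have "\<dots> = Cp * (1 + CQ) ^ K * ((1 + ?a) ^ K * ?b ^ (d * K))"
      by (simp add: power_mult_distrib power_mult[symmetric] mult_ac)
    finally have bound_c: "\<bar>monom \<alpha> x * c x\<bar> \<le> Cp * (1 + CQ) ^ K * ((1 + ?a) ^ K * ?b ^ (d * K))" .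
    have bound_w: "(1 + ?a) ^ K * ?w \<le> exp (real K ^ 2 / 4)"
      using power_one_plus_mult_exp_neg_square_le[of ?a K] by (simp add: gauss_weight_def defect_sq_eq_norm)
    have bound_D: "?b ^ (d * K) * ?D \<le> W * \<delta>"
      unfolding W_def by (rule power_one_plus_norm_Dpart_le[OF h H]) auto
    have "\<bar>monom \<alpha> x * chain_term P Q (c, \<beta>) h x\<bar> = \<bar>monom \<alpha> x * c x\<bar> * ?D * ?w"
      by (simp add: chain_term_def gauss_weight_def abs_mult mult.assoc)
    also have "\<dots> \<le> Cp * (1 + CQ) ^ K * (((1 + ?a) ^ K * ?w) * (?b ^ (d * K) * ?D))"
      using mult_right_mono[OF mult_right_mono[OF bound_c], of ?D ?w]
      by (simp add: gauss_weight_def mult_ac)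
    also have "\<dots> \<le> Cp * (1 + CQ) ^ K * (exp (real K ^ 2 / 4) * (W * \<delta>))"
      using \<open>Cp \<ge> 0\<close> \<open>CQ \<ge> 0\<close>
      by (intro mult_left_mono mult_mono[OF bound_w bound_D]) auto
    also have "\<dots> = C * \<delta>" by (simp add: C_def mult_ac)
    finally show ?thesis .
  qed
  moreover have "C \<ge> 0" using \<open>Cp \<ge> 0\<close> \<open>CQ \<ge> 0\<close> by (simp add: C_def W_def)
  ultimately show ?thesis by blast
qed

lemma chain_sum_bound:
  fixes P :: "real^'n \<Rightarrow> real^'m" and Q :: "real^'m \<Rightarrow> real^'n"
  assumes P: "poly_map P" and Q: "poly_map Q" and M: "\<forall>e\<in>#M. polyfun (fst e)"
  shows "\<exists>N C. C \<ge> 0 \<and> (\<forall>h \<delta> x. h \<in> schwartz \<longrightarrow> seminorms_le N \<delta> h \<longrightarrow>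
            \<bar>monom \<alpha> x * chain_sum P Q M h x\<bar> \<le> C * \<delta>)"
  using M
proof (induction M)
  case empty
  show ?case by (intro exI[of _ 0]) (auto intro: seminorms_le_nonneg)
next
  case (add e M)
  obtain c \<beta> where e: "e = (c, \<beta>)" by fastforce
  have "polyfun c" using add.prems e by simp
  obtain N1 C1 where "C1 \<ge> 0" and bound1: "\<And>h \<delta> x. h \<in> schwartz \<Longrightarrow> seminorms_le N1 \<delta> h \<Longrightarrow>
      \<bar>monom \<alpha> x * chain_term P Q (c, \<beta>) h x\<bar> \<le> C1 * \<delta>"
    using chain_term_bound[OF P Q \<open>polyfun c\<close>, of \<alpha> \<beta>] by blast
  obtain N2 C2 where "C2 \<ge> 0" and bound2: "\<And>h \<delta> x. h \<in> schwartz \<Longrightarrow> seminorms_le N2 \<delta> h \<Longrightarrow>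
      \<bar>monom \<alpha> x * chain_sum P Q M h x\<bar> \<le> C2 * \<delta>"
    using add.IH add.prems by force
  have "\<bar>monom \<alpha> x * chain_sum P Q (add_mset e M) h x\<bar> \<le> (C1 + C2) * \<delta>"
    if "h \<in> schwartz" "seminorms_le (N1 + N2) \<delta> h" for h \<delta> x
  proof -
    have "\<bar>monom \<alpha> x * chain_sum P Q (add_mset e M) h x\<bar>
        \<le> \<bar>monom \<alpha> x * chain_term P Q (c, \<beta>) h x\<bar> + \<bar>monom \<alpha> x * chain_sum P Q M h x\<bar>"
      by (simp add: e distrib_left)
    also have "\<dots> \<le> C1 * \<delta> + C2 * \<delta>"
      using that by (intro add_mono bound1 bound2) (auto elim: seminorms_le_mono)
    finally show ?thesis by (simp add: distrib_right)
  qed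
  then show ?case using \<open>C1 \<ge> 0\<close> \<open>C2 \<ge> 0\<close> by (intro exI[of _ "N1 + N2"] exI[of _ "C1 + C2"]) auto
qed

lemma Dpart_pullback_ext_bound:
  fixes P :: "real^'n \<Rightarrow> real^'m" and Q :: "real^'m \<Rightarrow> real^'n"
  assumes P: "poly_map P" and Q: "poly_map Q"
  shows "\<exists>N C. C \<ge> 0 \<and> (\<forall>h \<delta> x. h \<in> schwartz \<longrightarrow> seminorms_le N \<delta> h \<longrightarrow>
            \<bar>monom \<alpha> x * Dpart is (pullback_ext P Q h) x\<bar> \<le> C * \<delta>)"
proof -
  obtain M where M: "\<forall>e\<in>#M. polyfun (fst e)"
    and eq: "\<And>h. smooth_fun h \<Longrightarrow> Dpart is (pullback_ext P Q h) = chain_sum P Q M h"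
    using Dpart_pullback_ext_eq_chain_sum[OF P Q, of "is"] by blast
  show ?thesis
    using chain_sum_bound[OF P Q M, of \<alpha>] eq by (simp add: schwartz_def)
qed

lemma schwartz_pullback_ext:
  assumes P: "poly_map P" and Q: "poly_map Q" and h: "h \<in> schwartz"
  shows "pullback_ext P Q h \<in> schwartz"
  unfolding schwartz_def
proof (intro CollectI conjI allI)
  show "smooth_fun (pullback_ext P Q h)"
    using smooth_fun_pullback_ext[OF P Q] h by (simp add: schwartz_def)
  fix \<alpha> "is"
  obtain N C where bound: "\<And>\<delta> x. seminorms_le N \<delta> h \<Longrightarrow>
      \<bar>monom \<alpha> x * Dpart is (pullback_ext P Q h) x\<bar> \<le> C * \<delta>"
    using Dpart_pullback_ext_bound[OF P Q, of \<alpha> "is"] h by blast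
  obtain \<delta> where "seminorms_le N \<delta> h" using seminorms_le_exists[OF h] by blast
  then show "bounded (range (\<lambda>x. monom \<alpha> x * Dpart is (pullback_ext P Q h) x))"
    unfolding bounded_iff using bound by auto
qed

lemma pullback_ext_diff: "pullback_ext P Q (\<lambda>y. f y - g y) = (\<lambda>x. pullback_ext P Q f x - pullback_ext P Q g x)"
  by (simp add: pullback_ext_def fun_eq_iff left_diff_distrib)

lemma seminorm_bounds_finite:
  assumes "finite S"
    and "\<And>p. p \<in> S \<Longrightarrow> \<exists>N C. C \<ge> 0 \<and> (\<forall>h \<delta>. h \<in> schwartz \<longrightarrow> seminorms_le N \<delta> h \<longrightarrow> B p h \<le> C * \<delta>)"
  shows "\<exists>N C. C \<ge> 0 \<and> (\<forall>p\<in>S. \<forall>h \<delta>. h \<in> schwartz \<longrightarrow> seminorms_le N \<delta> h \<longrightarrow> B p h \<le> C * \<delta>)"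
  using assms
proof (induction S rule: finite_induct)
  case empty
  show ?case by auto
next
  case (insert p S)
  obtain N1 C1 where "C1 \<ge> 0"
    and bound1: "\<And>h \<delta>. h \<in> schwartz \<Longrightarrow> seminorms_le N1 \<delta> h \<Longrightarrow> B p h \<le> C1 * \<delta>"
    using insert.prems by blast
  obtain N2 C2 where "C2 \<ge> 0"
    and bound2: "\<And>q h \<delta>. q \<in> S \<Longrightarrow> h \<in> schwartz \<Longrightarrow> seminorms_le N2 \<delta> h \<Longrightarrow> B q h \<le> C2 * \<delta>"
    using insert by blast
  have "B q h \<le> max C1 C2 * \<delta>"
    if "q \<in> insert p S" "h \<in> schwartz" "seminorms_le (max N1 N2) \<delta> h" for q h \<delta>
  proof -
    have "\<delta> \<ge> 0" using seminorms_le_nonneg that(2,3) by blast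
    then have "C1 * \<delta> \<le> max C1 C2 * \<delta>" "C2 * \<delta> \<le> max C1 C2 * \<delta>"
      by (simp_all add: mult_right_mono)
    moreover have "seminorms_le N1 \<delta> h" "seminorms_le N2 \<delta> h"
      using that(3) by (auto elim: seminorms_le_mono)
    ultimately show ?thesis
      using that(1,2) bound1 bound2 by (metis insert_iff order_trans)
  qed
  then show ?case using \<open>C1 \<ge> 0\<close> by (intro exI[of _ "max N1 N2"] exI[of _ "max C1 C2"]) auto
qed

lemma sw_seminorm_pullback_ext_bound:
  fixes P :: "real^'n \<Rightarrow> real^'m" and Q :: "real^'m \<Rightarrow> real^'n"
  assumes P: "poly_map P" and Q: "poly_map Q"
  shows "\<exists>N C. C \<ge> 0 \<and> (\<forall>\<alpha> is h \<delta>. sum \<alpha> UNIV \<le> K \<longrightarrow> length is \<le> K \<longrightarrow> h \<in> schwartz \<longrightarrow>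
            seminorms_le N \<delta> h \<longrightarrow> sw_seminorm \<alpha> is (pullback_ext P Q h) \<le> C * \<delta>)"
proof -
  have "\<exists>N C. C \<ge> 0 \<and> (\<forall>p\<in>{(\<alpha>::'n \<Rightarrow> nat, is::'n list). sum \<alpha> UNIV \<le> K \<and> length is \<le> K}.
      \<forall>h \<delta>. h \<in> schwartz \<longrightarrow> seminorms_le N \<delta> h \<longrightarrow>
        sw_seminorm (fst p) (snd p) (pullback_ext P Q h) \<le> C * \<delta>)"
  proof (rule seminorm_bounds_finite[OF finite_orders_le])
    fix p :: "('n \<Rightarrow> nat) \<times> 'n list"
    obtain N C where "C \<ge> 0" and "\<forall>h \<delta> x. h \<in> schwartz \<longrightarrow> seminorms_le N \<delta> h \<longrightarrow>
        \<bar>monom (fst p) x * Dpart (snd p) (pullback_ext P Q h) x\<bar> \<le> C * \<delta>"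
      using Dpart_pullback_ext_bound[OF P Q] by blast
    then show "\<exists>N C. C \<ge> 0 \<and> (\<forall>h \<delta>. h \<in> schwartz \<longrightarrow> seminorms_le N \<delta> h \<longrightarrow>
        sw_seminorm (fst p) (snd p) (pullback_ext P Q h) \<le> C * \<delta>)"
      by (blast intro: sw_seminorm_le)
  qed
  then show ?thesis by auto
qed

section \<open>The Schwartz topologies\<close>

definition seminorm_ball :: "nat \<Rightarrow> real \<Rightarrow> (real^'n::finite \<Rightarrow> real) \<Rightarrow> (real^'n \<Rightarrow> real) set" where
  "seminorm_ball N \<epsilon> f = {g\<in>schwartz. \<forall>\<alpha> is. sum \<alpha> UNIV \<le> N \<longrightarrow> length is \<le> N \<longrightarrow>
      sw_seminorm \<alpha> is (\<lambda>x. g x - f x) < \<epsilon>}"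

lemma seminorm_ball_antimono: "N' \<le> N \<Longrightarrow> \<epsilon> \<le> \<epsilon>' \<Longrightarrow> seminorm_ball N \<epsilon> f \<subseteq> seminorm_ball N' \<epsilon>' f"
proof
  fix g assume "N' \<le> N" "\<epsilon> \<le> \<epsilon>'" and g: "g \<in> seminorm_ball N \<epsilon> f"
  have "sw_seminorm \<alpha> is (\<lambda>x. g x - f x) < \<epsilon>'" if "sum \<alpha> UNIV \<le> N'" "length is \<le> N'" for \<alpha> "is"
  proof -
    have "sum \<alpha> UNIV \<le> N" "length is \<le> N" using that \<open>N' \<le> N\<close> by auto
    then have "sw_seminorm \<alpha> is (\<lambda>x. g x - f x) < \<epsilon>" using g by (simp add: seminorm_ball_def)
    then show ?thesis using \<open>\<epsilon> \<le> \<epsilon>'\<close> by simp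
  qed
  then show "g \<in> seminorm_ball N' \<epsilon>' f" using g by (simp add: seminorm_ball_def)
qed

lemma istopology_seminorm_balls:
  "istopology (\<lambda>V. V \<subseteq> schwartz \<and> (\<forall>f\<in>V. \<exists>N. \<exists>\<epsilon>>0. seminorm_ball N \<epsilon> f \<subseteq> V))"
  unfolding istopology_def
proof (rule conjI; intro allI impI)
  fix S T :: "(real^'n \<Rightarrow> real) set"
  assume S: "S \<subseteq> schwartz \<and> (\<forall>f\<in>S. \<exists>N. \<exists>\<epsilon>>0. seminorm_ball N \<epsilon> f \<subseteq> S)"
    and T: "T \<subseteq> schwartz \<and> (\<forall>f\<in>T. \<exists>N. \<exists>\<epsilon>>0. seminorm_ball N \<epsilon> f \<subseteq> T)"
  have "\<exists>N. \<exists>\<epsilon>>0. seminorm_ball N \<epsilon> f \<subseteq> S \<inter> T" if f: "f \<in> S \<inter> T" for f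
  proof -
    obtain N1 e1 N2 e2 where "e1 > 0" "seminorm_ball N1 e1 f \<subseteq> S" "e2 > 0" "seminorm_ball N2 e2 f \<subseteq> T"
      using S T f by blast
    moreover have "seminorm_ball (max N1 N2) (min e1 e2) f \<subseteq> seminorm_ball N1 e1 f \<inter> seminorm_ball N2 e2 f"
      by (simp add: seminorm_ball_antimono)
    ultimately show ?thesis by (intro exI[of _ "max N1 N2"] exI[of _ "min e1 e2"]) auto
  qed
  then show "S \<inter> T \<subseteq> schwartz \<and> (\<forall>f\<in>S \<inter> T. \<exists>N. \<exists>\<epsilon>>0. seminorm_ball N \<epsilon> f \<subseteq> S \<inter> T)"
    using S by blast
next
  fix K :: "(real^'n \<Rightarrow> real) set set"
  assume "\<forall>S\<in>K. S \<subseteq> schwartz \<and> (\<forall>f\<in>S. \<exists>N. \<exists>\<epsilon>>0. seminorm_ball N \<epsilon> f \<subseteq> S)"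
  then show "\<Union>K \<subseteq> schwartz \<and> (\<forall>f\<in>\<Union>K. \<exists>N. \<exists>\<epsilon>>0. seminorm_ball N \<epsilon> f \<subseteq> \<Union>K)"
    by (meson Union_iff Union_least Union_upper order_trans)
qed

lemma openin_schwartz_top:
  "openin schwartz_top V \<longleftrightarrow> V \<subseteq> schwartz \<and> (\<forall>f\<in>V. \<exists>N. \<exists>\<epsilon>>0. seminorm_ball N \<epsilon> f \<subseteq> V)"
  unfolding schwartz_top_def topology_inverse'[OF istopology_seminorm_balls[unfolded seminorm_ball_def]]
    seminorm_ball_def ..

lemma topspace_schwartz_top: "topspace schwartz_top = schwartz"
proof -
  have "openin schwartz_top schwartz"
    unfolding openin_schwartz_top by (auto simp: seminorm_ball_def intro: exI[of _ "1::real"])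
  moreover have "topspace schwartz_top \<subseteq> schwartz"
    unfolding topspace_def by (auto simp: openin_schwartz_top)
  ultimately show ?thesis using openin_subset by blast
qed

lemma openin_schwartz_on_top:
  fixes E :: "(real^'n) set"
  shows "openin (schwartz_on_top E) U \<longleftrightarrow> U \<subseteq> schwartz_on E \<and> openin schwartz_top {f \<in> schwartz. restr E f \<in> U}"
proof -
  have "istopology (\<lambda>U. U \<subseteq> schwartz_on E \<and> openin schwartz_top {f \<in> schwartz. restr E f \<in> U})"
    unfolding istopology_def
  proof (rule conjI; intro allI impI)
    fix S T :: "(real^'n \<Rightarrow> real) set"
    assume "S \<subseteq> schwartz_on E \<and> openin schwartz_top {f \<in> schwartz. restr E f \<in> S}"
      and "T \<subseteq> schwartz_on E \<and> openin schwartz_top {f \<in> schwartz. restr E f \<in> T}"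
    moreover have "{f \<in> schwartz. restr E f \<in> S \<inter> T} =
        {f \<in> schwartz. restr E f \<in> S} \<inter> {f \<in> schwartz. restr E f \<in> T}" by auto
    ultimately show "S \<inter> T \<subseteq> schwartz_on E \<and> openin schwartz_top {f \<in> schwartz. restr E f \<in> S \<inter> T}"
      by auto
  next
    fix K :: "(real^'n \<Rightarrow> real) set set"
    assume K: "\<forall>U\<in>K. U \<subseteq> schwartz_on E \<and> openin schwartz_top {f \<in> schwartz. restr E f \<in> U}"
    have "{f \<in> schwartz. restr E f \<in> \<Union>K} = (\<Union>U\<in>K. {f \<in> schwartz. restr E f \<in> U})" by auto
    then show "\<Union>K \<subseteq> schwartz_on E \<and> openin schwartz_top {f \<in> schwartz. restr E f \<in> \<Union>K}"
      using K by (auto intro!: openin_Union)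
  qed
  then show ?thesis unfolding schwartz_on_top_def by (simp add: topology_inverse')
qed

lemma topspace_schwartz_on_top: "topspace (schwartz_on_top E) = schwartz_on E"
proof -
  have "{f \<in> schwartz. restr E f \<in> schwartz_on E} = topspace schwartz_top"
    by (auto simp: schwartz_on_def topspace_schwartz_top)
  then have "openin (schwartz_on_top E) (schwartz_on E)"
    unfolding openin_schwartz_on_top by simp
  moreover have "topspace (schwartz_on_top E) \<subseteq> schwartz_on E"
    unfolding topspace_def by (auto simp: openin_schwartz_on_top)
  ultimately show ?thesis using openin_subset by blast
qed

lemma image_seminorm_ball_subset:
  fixes T :: "(real^'m \<Rightarrow> real) \<Rightarrow> real^'n \<Rightarrow> real"
  assumes T: "\<And>h. h \<in> schwartz \<Longrightarrow> T h \<in> schwartz"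
    and T_diff: "\<And>f g. T (\<lambda>x. f x - g x) = (\<lambda>x. T f x - T g x)"
    and bound: "\<exists>N C. C \<ge> 0 \<and> (\<forall>\<alpha> is h \<delta>. sum \<alpha> UNIV \<le> K \<longrightarrow> length is \<le> K \<longrightarrow> h \<in> schwartz \<longrightarrow>
            seminorms_le N \<delta> h \<longrightarrow> sw_seminorm \<alpha> is (T h) \<le> C * \<delta>)"
    and "f \<in> schwartz" and "\<epsilon>' > 0"
  shows "\<exists>N. \<exists>\<epsilon>>0. T ` seminorm_ball N \<epsilon> f \<subseteq> seminorm_ball K \<epsilon>' (T f)"
proof -
  obtain N C where "C \<ge> 0" and bound: "\<And>\<alpha> is h \<delta>. sum \<alpha> UNIV \<le> K \<Longrightarrow> length is \<le> K \<Longrightarrow>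
      h \<in> schwartz \<Longrightarrow> seminorms_le N \<delta> h \<Longrightarrow> sw_seminorm \<alpha> is (T h) \<le> C * \<delta>"
    using bound by blast
  define \<epsilon> where "\<epsilon> = \<epsilon>' / (C + 1)"
  have "\<epsilon> > 0" "C * \<epsilon> < \<epsilon>'"
    using \<open>\<epsilon>' > 0\<close> \<open>C \<ge> 0\<close> by (simp_all add: \<epsilon>_def field_simps)
  have "T g \<in> seminorm_ball K \<epsilon>' (T f)" if "g \<in> seminorm_ball N \<epsilon> f" for g
  proof -
    have "g \<in> schwartz" using that by (simp add: seminorm_ball_def)
    have diff: "(\<lambda>x. g x - f x) \<in> schwartz" by (rule schwartz_diff[OF \<open>g \<in> schwartz\<close> \<open>f \<in> schwartz\<close>])
    have "seminorms_le N \<epsilon> (\<lambda>x. g x - f x)"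
      using that by (auto simp: seminorm_ball_def seminorms_le_def less_imp_le)
    then have "sw_seminorm \<alpha> is (\<lambda>x. T g x - T f x) < \<epsilon>'"
      if "sum \<alpha> UNIV \<le> K" "length is \<le> K" for \<alpha> "is"
      using bound[OF that diff] \<open>C * \<epsilon> < \<epsilon>'\<close> T_diff[of g f] by fastforce
    then show ?thesis using T[OF \<open>g \<in> schwartz\<close>] by (simp add: seminorm_ball_def)
  qed
  then show ?thesis using \<open>\<epsilon> > 0\<close> by blast
qed

lemma continuous_map_schwartz_top_linear:
  fixes T :: "(real^'m \<Rightarrow> real) \<Rightarrow> real^'n \<Rightarrow> real"
  assumes T: "\<And>h. h \<in> schwartz \<Longrightarrow> T h \<in> schwartz"
    and T_diff: "\<And>f g. T (\<lambda>x. f x - g x) = (\<lambda>x. T f x - T g x)"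
    and bound: "\<And>K. \<exists>N C. C \<ge> 0 \<and> (\<forall>\<alpha> is h \<delta>. sum \<alpha> UNIV \<le> K \<longrightarrow> length is \<le> K \<longrightarrow> h \<in> schwartz \<longrightarrow>
            seminorms_le N \<delta> h \<longrightarrow> sw_seminorm \<alpha> is (T h) \<le> C * \<delta>)"
  shows "continuous_map schwartz_top schwartz_top T"
  unfolding continuous_map_def topspace_schwartz_top
proof (intro conjI allI impI)
  show "T \<in> schwartz \<rightarrow> schwartz" using T by blast
  fix U :: "(real^'n \<Rightarrow> real) set" assume "openin schwartz_top U"
  have "\<exists>N. \<exists>\<epsilon>>0. seminorm_ball N \<epsilon> f \<subseteq> {f \<in> schwartz. T f \<in> U}"
    if f: "f \<in> schwartz" "T f \<in> U" for f
  proof -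
    obtain K \<epsilon>' where "\<epsilon>' > 0" and "seminorm_ball K \<epsilon>' (T f) \<subseteq> U"
      using \<open>openin schwartz_top U\<close> f unfolding openin_schwartz_top by blast
    moreover obtain N \<epsilon> where "\<epsilon> > 0" "T ` seminorm_ball N \<epsilon> f \<subseteq> seminorm_ball K \<epsilon>' (T f)"
      using image_seminorm_ball_subset[OF T T_diff bound f(1) \<open>\<epsilon>' > 0\<close>] by blast
    moreover have "seminorm_ball N \<epsilon> f \<subseteq> schwartz" by (auto simp: seminorm_ball_def)
    ultimately show ?thesis by blast
  qed
  then show "openin schwartz_top {f \<in> schwartz. T f \<in> U}"
    unfolding openin_schwartz_top by blast
qed

lemma continuous_map_schwartz_on_top:
  assumes T: "continuous_map schwartz_top schwartz_top T"
    and restr_eq: "\<And>h. G (restr F h) = restr E (T h)"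
  shows "G ` schwartz_on F \<subseteq> schwartz_on E \<and> continuous_map (schwartz_on_top F) (schwartz_on_top E) G"
proof
  have T_schwartz: "T h \<in> schwartz" if "h \<in> schwartz" for h
    using T that by (simp add: continuous_map_def topspace_schwartz_top Pi_iff)
  then show image: "G ` schwartz_on F \<subseteq> schwartz_on E"
    by (auto simp: schwartz_on_def restr_eq)
  show "continuous_map (schwartz_on_top F) (schwartz_on_top E) G"
    unfolding continuous_map_def topspace_schwartz_on_top
  proof (intro conjI allI impI)
    show "G \<in> schwartz_on F \<rightarrow> schwartz_on E" using image by blast
    fix U assume "openin (schwartz_on_top E) U"
    then have "openin schwartz_top {g \<in> schwartz. restr E g \<in> U}"
      by (simp add: openin_schwartz_on_top)
    with T have "openin schwartz_top {f \<in> topspace schwartz_top. T f \<in> {g \<in> schwartz. restr E g \<in> U}}"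
      by (rule openin_continuous_map_preimage)
    moreover have "{f \<in> topspace schwartz_top. T f \<in> {g \<in> schwartz. restr E g \<in> U}} =
        {f \<in> schwartz. restr F f \<in> {u \<in> schwartz_on F. G u \<in> U}}"
      using T_schwartz by (auto simp: topspace_schwartz_top schwartz_on_def restr_eq)
    ultimately show "openin (schwartz_on_top F) {u \<in> schwartz_on F. G u \<in> U}"
      unfolding openin_schwartz_on_top by simp
  qed
qed

lemma pullback_restr_eq_restr_pullback_ext:
  assumes "P ` E = F" "\<forall>x\<in>E. Q (P x) = x"
  shows "pullback E P (restr F h) = restr E (pullback_ext P Q h)"
  using assms
  by (auto simp: fun_eq_iff pullback_def restr_def pullback_ext_def gauss_weight_def defect_sq_def)

theorem lemma3p1:
  fixes E :: "(real^'n) set" and F :: "(real^'m) set"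
    and P :: "real^'n \<Rightarrow> real^'m" and Q :: "real^'m \<Rightarrow> real^'n"
  assumes "closed E" and "closed F"
    and "poly_map P" and "poly_map Q"
    and "P ` E = F"
    and "\<forall>x\<in>E. Q (P x) = x"
  shows "pullback E P ` schwartz_on F \<subseteq> schwartz_on E
    \<and> continuous_map (schwartz_on_top F) (schwartz_on_top E) (pullback E P)"
proof (rule continuous_map_schwartz_on_top)
  show "continuous_map schwartz_top schwartz_top (pullback_ext P Q)"
    by (rule continuous_map_schwartz_top_linear[OF schwartz_pullback_ext pullback_ext_diff
          sw_seminorm_pullback_ext_bound]) (use assms(3,4) in auto)
  show "pullback E P (restr F h) = restr E (pullback_ext P Q h)" for h
    using assms(5,6) by (rule pullback_restr_eq_restr_pullback_ext)
qed

end
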